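(* Under the assumptions of Theorem 1 (with $\varepsilon>0$), let $(u,v)$ be a classical solution on $[0,T)$ with $u>0$, and set $\tilde u=u-\alpha$, $\tilde v=v-\beta$ with $\beta(x,t)=[\beta_2(t)-\beta_1(t)]x+\beta_1(t)$. Then there exists $C>0$ independent of $t$ and $T$ such that for all $t\in[0,T)$ \[ \|\tilde u(t)\|^2+\|\tilde v(t)\|^2+\int_0^t\|\tilde u_x(\tau)\|^2\,d\tau\le C . \]
   Context: Setting of Theorem 1: $\varepsilon>0$; on $(0,1)\times(0,\infty)$, $u_t-(uv)_x=u_{xx}$, $v_t-u_x=\varepsilon v_{xx}+\varepsilon(v^2)_x$, $(u,v)(x,0)=(u_0,v_0)(x)$, $u(0,t)=u(1,t)=\alpha(t)$, $v(0,t)=\beta_1(t)$, $v(1,t)=\beta_2(t)$; $u_0>0$, $(u_0,v_0)\in[H^2((0,1))]^2$ compatible with the boundary data; $\alpha,\beta_1,\beta_2$ smooth on $[0,\infty)$ with $\alpha\ge\underline\alpha>0$, $\alpha'\in W^{1,1}(\mathbb{R}_+)$, $\beta_1-\beta_2\in L^1(\mathbb{R}_+)$, $\beta_1',\beta_2'\in W^{1,1}(\mathbb{R}_+)$. $\|\cdot\|$ is the $L^2((0,1))$ norm. *)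

theory Defs imports "HOL-Analysis.Analysis" begin

definition smooth_derivs :: "real set \<Rightarrow> (real \<Rightarrow> real) \<Rightarrow> (nat \<Rightarrow> real \<Rightarrow> real) \<Rightarrow> bool" where
  "smooth_derivs S f D \<longleftrightarrow> (\<forall>t\<in>S. D 0 t = f t) \<and>
     (\<forall>k. \<forall>t\<in>S. (D k has_real_derivative D (Suc k) t) (at t within S))"

text \<open>Sobolev space H^2((0,1)) in one dimension: f = a + b x + double primitive of an L^2 function.\<close>
definition H2_01 :: "(real \<Rightarrow> real) \<Rightarrow> bool" where
  "H2_01 f \<longleftrightarrow> (\<exists>a b g. g \<in> borel_measurable lborel \<and>
      set_integrable lborel {0..1} (\<lambda>x. (g x)^2) \<and>
      (\<forall>x\<in>{0..1}. f x = a + b * x +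
         (LINT y:{0..x}|lborel. (LINT z:{0..y}|lborel. g z))))"

definition classical_sol ::
  "real \<Rightarrow> (real \<Rightarrow> real) \<Rightarrow> (real \<Rightarrow> real) \<Rightarrow> (real \<Rightarrow> real) \<Rightarrow> (real \<Rightarrow> real) \<Rightarrow> (real \<Rightarrow> real)
   \<Rightarrow> real \<Rightarrow> (real \<Rightarrow> real \<Rightarrow> real) \<Rightarrow> (real \<Rightarrow> real \<Rightarrow> real) \<Rightarrow> bool" where
  "classical_sol \<epsilon> u0 v0 \<alpha> \<beta>1 \<beta>2 T u v \<longleftrightarrow>
   (\<exists>ux vx uxx vxx ut vt.
     continuous_on ({0..1} \<times> {0..<T}) (\<lambda>(x,t). u x t) \<and>
     continuous_on ({0..1} \<times> {0..<T}) (\<lambda>(x,t). v x t) \<and>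
     continuous_on ({0..1} \<times> {0..<T}) (\<lambda>(x,t). ux x t) \<and>
     continuous_on ({0..1} \<times> {0..<T}) (\<lambda>(x,t). vx x t) \<and>
     continuous_on ({0..1} \<times> {0<..<T}) (\<lambda>(x,t). uxx x t) \<and>
     continuous_on ({0..1} \<times> {0<..<T}) (\<lambda>(x,t). vxx x t) \<and>
     continuous_on ({0..1} \<times> {0<..<T}) (\<lambda>(x,t). ut x t) \<and>
     continuous_on ({0..1} \<times> {0<..<T}) (\<lambda>(x,t). vt x t) \<and>
     (\<forall>x\<in>{0..1}. \<forall>t\<in>{0..<T}.
        ((\<lambda>y. u y t) has_real_derivative ux x t) (at x within {0..1}) \<and>
        ((\<lambda>y. v y t) has_real_derivative vx x t) (at x within {0..1})) \<and>
     (\<forall>x\<in>{0..1}. \<forall>t\<in>{0<..<T}.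
        ((\<lambda>y. ux y t) has_real_derivative uxx x t) (at x within {0..1}) \<and>
        ((\<lambda>y. vx y t) has_real_derivative vxx x t) (at x within {0..1}) \<and>
        ((\<lambda>s. u x s) has_real_derivative ut x t) (at t) \<and>
        ((\<lambda>s. v x s) has_real_derivative vt x t) (at t)) \<and>
     (\<forall>x\<in>{0<..<1}. \<forall>t\<in>{0<..<T}.
        ut x t - (ux x t * v x t + u x t * vx x t) = uxx x t \<and>
        vt x t - ux x t = \<epsilon> * vxx x t + \<epsilon> * (2 * v x t * vx x t)) \<and>
     (\<forall>x\<in>{0..1}. u x 0 = u0 x \<and> v x 0 = v0 x) \<and>
     (\<forall>t\<in>{0..<T}. u 0 t = \<alpha> t \<and> u 1 t = \<alpha> t \<and> v 0 t = \<beta>1 t \<and> v 1 t = \<beta>2 t))"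

end

theory Submission imports Defs begin

text \<open>
  Two energy estimates, each closed by Gronwall's inequality. The relative entropy
  \<open>E1 = \<integral> u ln (u/\<alpha>) - u + \<alpha> + (v - \<beta>)\<^sup>2/2\<close> is chosen so that, after integrating by
  parts, the cross terms of the two equations cancel: its derivative is
  \<open>- \<integral> u\<^sub>x\<^sup>2/u - \<epsilon> \<integral> (v\<^sub>x - \<beta>\<^sub>x)\<^sup>2\<close> plus boundary-data terms bounded by \<open>g (E1 + 1)\<close>, where
  \<open>g = \<bar>\<alpha>'\<bar> + \<bar>\<beta>1 - \<beta>2\<bar> + \<bar>\<beta>1'\<bar> + \<bar>\<beta>2'\<bar>\<close> is integrable on \<open>[0,\<infinity>)\<close>. This bounds \<open>E1\<close> and the
  dissipation \<open>\<integral>\<integral> (v\<^sub>x - \<beta>\<^sub>x)\<^sup>2\<close> uniformly in time. As \<open>v - \<beta>\<close> vanishes at \<open>x = 0\<close>, that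
  dissipation also controls \<open>sup\<^sub>x (v - \<beta>)\<^sup>2\<close>, and then the plain energy \<open>\<integral> (u - \<alpha>)\<^sup>2/2\<close>
  obeys an inequality of the same shape with the integrable rate \<open>K2 (\<integral> (v\<^sub>x - \<beta>\<^sub>x)\<^sup>2 + g)\<close>,
  which bounds \<open>\<integral> (u - \<alpha>)\<^sup>2\<close> together with \<open>\<integral>\<integral> u\<^sub>x\<^sup>2\<close>.
\<close>

section \<open>Gronwall inequalities and integral bounds\<close>

lemma gronwall_affine:
  fixes F h :: "real \<Rightarrow> real"
  assumes b: "0 \<le> b" and cF: "continuous_on {0..b} F" and ch: "continuous_on {0..b} h"
    and dF: "\<And>t. 0 < t \<Longrightarrow> t < b \<Longrightarrow> \<exists>d. (F has_real_derivative d) (at t) \<and> d \<le> h t * (F t + 1)"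
  shows "F b + 1 \<le> (F 0 + 1) * exp (integral {0..b} h)"
proof -
  define H where "H s = integral {0..s} h" for s
  define W where "W s = (F s + 1) * exp (- H s)" for s
  have cH: "continuous_on {0..b} H"
    unfolding H_def by (rule indefinite_integral_continuous_1[OF integrable_continuous_interval[OF ch]])
  have cW: "continuous_on {0..b} W" unfolding W_def
    by (intro continuous_intros cF cH)
  have "W b \<le> W 0"
  proof (rule DERIV_nonpos_imp_decreasing_open[OF b _ cW])
    fix t assume t: "0 < t" "t < b"
    obtain d where d: "(F has_real_derivative d) (at t)" "d \<le> h t * (F t + 1)" using dF[OF t] by blast
    have "(H has_real_derivative h t) (at t within {0..b})"
      unfolding H_def by (rule integral_has_real_derivative[OF ch]) (use t in auto)
    moreover have "at t within {0..b} = at t" by (rule at_within_interior) (use t in auto)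
    ultimately have dH: "(H has_real_derivative h t) (at t)" by simp
    have "(W has_real_derivative exp (- H t) * (d - h t * (F t + 1))) (at t)"
      unfolding W_def by (auto intro!: derivative_eq_intros d(1) dH simp: algebra_simps)
    moreover have "exp (- H t) * (d - h t * (F t + 1)) \<le> 0"
      using d(2) by (intro mult_nonneg_nonpos) auto
    ultimately show "\<exists>y. (W has_real_derivative y) (at t) \<and> y \<le> 0" by blast
  qed
  then have "(F b + 1) * exp (- H b) \<le> F 0 + 1" unfolding W_def H_def by simp
  then have "(F b + 1) * exp (- H b) * exp (H b) \<le> (F 0 + 1) * exp (H b)"
    by (rule mult_right_mono) auto
  then show ?thesis by (simp add: H_def mult.assoc flip: exp_add)
qed

lemma gronwall_with_dissipation:
  fixes E D h :: "real \<Rightarrow> real"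
  assumes b: "0 \<le> b" and c: "0 \<le> c"
    and cE: "continuous_on {0..b} E" and cD: "continuous_on {0..b} D" and ch: "continuous_on {0..b} h"
    and D: "\<And>t. t \<in> {0..b} \<Longrightarrow> 0 \<le> D t" and h: "\<And>t. t \<in> {0..b} \<Longrightarrow> 0 \<le> h t"
    and dE: "\<And>t. 0 < t \<Longrightarrow> t < b \<Longrightarrow>
               \<exists>e. (E has_real_derivative e) (at t) \<and> e \<le> - c * D t + h t * (E t + 1)"
  shows "E b + c * integral {0..b} D + 1 \<le> (E 0 + 1) * exp (integral {0..b} h)"
proof -
  define F where "F s = E s + c * integral {0..s} D" for s
  have cF: "continuous_on {0..b} F" unfolding F_def
    by (intro continuous_intros cE indefinite_integral_continuous_1 integrable_continuous_interval cD)
  have "F b + 1 \<le> (F 0 + 1) * exp (integral {0..b} h)"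
  proof (rule gronwall_affine[OF b cF ch])
    fix t assume t: "0 < t" "t < b"
    obtain e where e: "(E has_real_derivative e) (at t)" "e \<le> - c * D t + h t * (E t + 1)"
      using dE[OF t] by blast
    have "((\<lambda>s. integral {0..s} D) has_real_derivative D t) (at t within {0..b})"
      by (rule integral_has_real_derivative[OF cD]) (use t in auto)
    moreover have "at t within {0..b} = at t" by (rule at_within_interior) (use t in auto)
    ultimately have dI: "((\<lambda>s. integral {0..s} D) has_real_derivative D t) (at t)" by simp
    have dF: "(F has_real_derivative e + c * D t) (at t)"
      unfolding F_def by (rule DERIV_add[OF e(1) DERIV_cmult[OF dI]])
    have "0 \<le> integral {0..t} D"
      using t D by (intro integral_nonneg integrable_continuous_interval continuous_on_subset[OF cD]) auto
    then have "h t * (E t + 1) \<le> h t * (F t + 1)"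
      using c h[of t] t unfolding F_def by (intro mult_left_mono) auto
    with e(2) dF show "\<exists>d. (F has_real_derivative d) (at t) \<and> d \<le> h t * (F t + 1)"
      by (intro exI[of _ "e + c * D t"]) auto
  qed
  then show ?thesis unfolding F_def by simp
qed

lemma square_integral_le_integral_square:
  fixes f :: "real \<Rightarrow> real"
  assumes cf: "continuous_on {0..1} f" and x: "0 \<le> x" "x \<le> 1"
  shows "(integral {0..x} f)^2 \<le> integral {0..1} (\<lambda>y. (f y)^2)"
proof -
  define c where "c = integral {0..x} f"
  have cfx: "continuous_on {0..x} f" using x by (intro continuous_on_subset[OF cf]) auto
  have i2: "(\<lambda>y. (f y)^2) integrable_on {0..x}"
    by (rule integrable_continuous_interval) (intro continuous_intros cfx)
  have i3: "(\<lambda>y. 2*c * f y) integrable_on {0..x}"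
    by (intro integrable_continuous_interval continuous_intros cfx)
  have "0 \<le> integral {0..x} (\<lambda>y. (f y - c)^2)"
    by (rule integral_nonneg) (auto intro!: integrable_continuous_interval continuous_intros cfx)
  also have "integral {0..x} (\<lambda>y. (f y - c)^2) = integral {0..x} (\<lambda>y. (f y)^2 - 2*c * f y + c^2)"
    by (simp add: power2_diff algebra_simps)
  also have "\<dots> = integral {0..x} (\<lambda>y. (f y)^2 - 2*c * f y) + integral {0..x} (\<lambda>y. c^2)"
    by (rule integral_add) (auto intro: integrable_diff i2 i3)
  also have "\<dots> = integral {0..x} (\<lambda>y. (f y)^2) - 2*c*c + c^2 * x"
    using x by (simp add: integral_diff[OF i2 i3] c_def[symmetric])
  finally have "c^2 * (2 - x) \<le> integral {0..x} (\<lambda>y. (f y)^2)"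
    by (simp add: power2_eq_square algebra_simps)
  moreover have "c^2 \<le> c^2 * (2 - x)" using x by (simp add: mult_le_cancel_left1)
  moreover have "integral {0..x} (\<lambda>y. (f y)^2) \<le> integral {0..1} (\<lambda>y. (f y)^2)"
    by (rule integral_subset_le) (use x i2 in \<open>auto intro!: integrable_continuous_interval continuous_intros cf\<close>)
  ultimately show ?thesis unfolding c_def by linarith
qed

lemma integral_abs_le_L1_norm:
  fixes f :: "real \<Rightarrow> real"
  assumes si: "set_integrable lborel {0..} f" and t: "0 \<le> t"
  shows "integral {0..t} (\<lambda>s. \<bar>f s\<bar>) \<le> (LINT s:{0..}|lborel. \<bar>f s\<bar>)"
proof -
  have sa: "set_integrable lborel {0..} (\<lambda>s. \<bar>f s\<bar>)" by (rule set_integrable_abs[OF si])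
  have st: "set_integrable lborel {0..t} (\<lambda>s. \<bar>f s\<bar>)"
    by (rule set_integrable_subset[OF sa]) auto
  have "integral {0..t} (\<lambda>s. \<bar>f s\<bar>) = (LINT s:{0..t}|lborel. \<bar>f s\<bar>)"
    using set_borel_integral_eq_integral(2)[OF st] by simp
  also have "\<dots> \<le> (LINT s:{0..}|lborel. \<bar>f s\<bar>)"
    using st sa unfolding set_lebesgue_integral_def set_integrable_def
    by (intro integral_mono) (auto simp: indicator_def)
  finally show ?thesis .
qed

lemma abs_le_initial_plus_L1_norm_deriv:
  fixes f f' :: "real \<Rightarrow> real"
  assumes d: "\<And>t. 0 \<le> t \<Longrightarrow> (f has_real_derivative f' t) (at t within {0..})"
    and cf': "continuous_on {0..} f'" and si: "set_integrable lborel {0..} f'" and t: "0 \<le> t"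
  shows "\<bar>f t\<bar> \<le> \<bar>f 0\<bar> + (LINT s:{0..}|lborel. \<bar>f' s\<bar>)"
proof -
  have "(f' has_integral (f t - f 0)) {0..t}"
  proof (rule fundamental_theorem_of_calculus[OF t])
    fix x assume x: "x \<in> {0..t}"
    have "(f has_real_derivative f' x) (at x within {0..t})"
      by (rule DERIV_subset[OF d]) (use x in auto)
    then show "(f has_vector_derivative f' x) (at x within {0..t})"
      by (simp add: has_real_derivative_iff_has_vector_derivative)
  qed
  then have e: "f t - f 0 = integral {0..t} f'" and i: "f' integrable_on {0..t}"
    by (auto simp: integral_unique)
  have ia: "(\<lambda>s. \<bar>f' s\<bar>) integrable_on {0..t}"
    by (rule integrable_continuous_interval)
       (use t in \<open>auto intro!: continuous_intros continuous_on_subset[OF cf']\<close>)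
  have "\<bar>integral {0..t} f'\<bar> \<le> integral {0..t} (\<lambda>s. \<bar>f' s\<bar>)"
    using integral_norm_bound_integral[OF i ia] by simp
  also have "\<dots> \<le> (LINT s:{0..}|lborel. \<bar>f' s\<bar>)"
    by (rule integral_abs_le_L1_norm[OF si t])
  finally show ?thesis using e by linarith
qed

lemma continuous_on_swap_product:
  assumes "continuous_on ({0..1::real} \<times> S) (\<lambda>(x,t). f x t)" "S' \<subseteq> S"
  shows "continuous_on (S' \<times> {0..1}) (\<lambda>p. f (snd p) (fst p))"
proof -
  have "continuous_on (S' \<times> {0..1}) (\<lambda>p. (\<lambda>(x,t). f x t) (snd p, fst p))"
    by (rule continuous_on_compose2[OF assms(1)]) (use assms(2) in \<open>auto intro!: continuous_intros\<close>)
  then show ?thesis by simp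
qed

lemma continuous_on_slice:
  assumes "continuous_on (S \<times> {0..1::real}) (\<lambda>p. f (snd p) (fst p))" "t \<in> S"
  shows "continuous_on {0..1} (\<lambda>x. f x t)"
proof -
  have "continuous_on {0..1} (\<lambda>x. (\<lambda>p. f (snd p) (fst p)) (t, x))"
    by (rule continuous_on_compose2[OF assms(1)]) (auto intro!: continuous_intros simp: assms(2))
  then show ?thesis by simp
qed

lemma integrable_on_slice:
  assumes "continuous_on (S \<times> {0..1::real}) (\<lambda>p. f (snd p) (fst p))" "t \<in> S"
  shows "(\<lambda>x. f x t :: real) integrable_on {0..1}"
  by (rule integrable_continuous_interval[OF continuous_on_slice[OF assms]])

lemma integral_le_via_flux:
  fixes P Q Q' f e :: "real \<Rightarrow> real"
  assumes cQ: "continuous_on {0..1} Q"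
    and dQ: "\<And>x. 0 < x \<Longrightarrow> x < 1 \<Longrightarrow> (Q has_real_derivative Q' x) (at x)"
    and Q_bdry: "Q 0 = 0" "Q 1 = 0"
    and iP: "P integrable_on {0..1}" and iQ': "Q' integrable_on {0..1}"
    and i_f: "f integrable_on {0..1}" and ie: "e integrable_on {0..1}"
    and le: "\<And>x. 0 < x \<Longrightarrow> x < 1 \<Longrightarrow> P x \<le> Q' x - c * f x + d * (e x + 1)"
  shows "integral {0..1} P \<le> - c * integral {0..1} f + d * (integral {0..1} e + 1)"
proof -
  have "(Q' has_integral (Q 1 - Q 0)) {0..1}"
    by (rule fundamental_theorem_of_calculus_interior)
       (use cQ dQ in \<open>auto simp: has_real_derivative_iff_has_vector_derivative\<close>)
  then have Q'0: "integral {0..1} Q' = 0" using Q_bdry by (simp add: integral_unique)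
  define R where "R x = Q' x - c * f x + d * (e x + 1)" for x
  have i1: "(\<lambda>x::real. 1::real) integrable_on {0..1}"
    by (rule integrable_continuous_interval[OF continuous_on_const])
  have iR: "R integrable_on {0..1}" unfolding R_def
    by (intro integrable_add integrable_diff integrable_on_mult_right iQ' i_f ie i1)
  have "integral {0<..<1} P \<le> integral {0<..<1} R"
    using iP iR le unfolding R_def
    by (intro integral_le) (auto simp: integrable_on_Icc_iff_Ioo[symmetric])
  then have "integral {0..1} P \<le> integral {0..1} R"
    by (simp add: integral_open_interval_real[symmetric])
  also have "integral {0..1} R
      = integral {0..1} (\<lambda>x. Q' x - c * f x) + integral {0..1} (\<lambda>x. d * (e x + 1))"
    unfolding R_def
    by (intro integral_add integrable_diff integrable_on_mult_right integrable_add iQ' i_f ie i1)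
  also have "\<dots> = - c * integral {0..1} f + d * (integral {0..1} e + 1)"
    using Q'0 by (simp add: integral_diff[OF iQ' integrable_on_mult_right[OF i_f]] integral_add[OF ie i1])
  finally show ?thesis .
qed

section \<open>Pointwise inequalities\<close>

definition entropy_density :: "real \<Rightarrow> real \<Rightarrow> real" where
  "entropy_density a w = w * ln (w / a) - w + a"

lemma entropy_density_nonneg:
  assumes "w > 0" "a > 0"
  shows "0 \<le> entropy_density a w"
proof -
  have "ln (a/w) \<le> a/w - 1" by (rule ln_le_minus_one) (use assms in auto)
  moreover have "ln (a/w) = - ln (w/a)" using assms by (simp add: ln_div)
  ultimately have "w * (- ln (w/a)) \<le> w * (a/w - 1)" using assms by (intro mult_left_mono) auto
  then show ?thesis using assms by (simp add: entropy_density_def algebra_simps)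
qed

lemma le_entropy_density:
  assumes "w > 0" "a > 0"
  shows "w \<le> entropy_density a w + 9 * a"
proof (cases "w \<ge> 9 * a")
  case True
  have "exp (2::real) = exp 1 * exp 1" by (simp flip: exp_add)
  also have "\<dots> \<le> 3 * 3" using exp_le by (intro mult_mono) auto
  also have "\<dots> \<le> w / a" using True assms by (simp add: field_simps)
  finally have "2 \<le> ln (w/a)" using assms by (simp add: ln_ge_iff)
  then have "w * 2 \<le> w * ln (w/a)" using assms by (intro mult_left_mono) auto
  then show ?thesis using assms unfolding entropy_density_def by linarith
next
  case False
  then show ?thesis using entropy_density_nonneg[OF assms] assms by linarith
qed

lemma abs_le_half_square_plus_half: "\<bar>V::real\<bar> \<le> V^2/2 + 1/2"
proof -
  have "0 \<le> (\<bar>V\<bar> - 1)^2" by simp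
  then show ?thesis by (simp add: power2_eq_square algebra_simps abs_mult_self_eq)
qed

lemma abs_convex_combination_le:
  fixes x p q :: real assumes "0 \<le> x" "x \<le> 1"
  shows "\<bar>(1 - x) * p + x * q\<bar> \<le> (1 - x) * \<bar>p\<bar> + x * \<bar>q\<bar>"
proof -
  have "\<bar>(1 - x) * p + x * q\<bar> \<le> \<bar>(1 - x) * p\<bar> + \<bar>x * q\<bar>" by (rule abs_triangle_ineq)
  also have "\<dots> = (1 - x) * \<bar>p\<bar> + x * \<bar>q\<bar>" using assms by (simp add: abs_mult)
  finally show ?thesis .
qed

lemma entropy_remainder_le:
  fixes uu U V Vx ux alpha al' bx bt btt Phi g eps a B c1 :: real
  assumes u: "uu > 0" and a: "a > 0" "a \<le> alpha" and U: "\<bar>U\<bar> \<le> c1*(Phi+1)" and Phi: "Phi \<ge> 0"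
    and eps: "eps > 0" and bt: "\<bar>bt\<bar> \<le> B" and bx: "\<bar>bx\<bar> \<le> g" and al': "\<bar>al'\<bar> \<le> g"
    and btt: "\<bar>btt\<bar> \<le> g" and c1: "c1 \<ge> 0" and B: "B \<ge> 0"
  shows "- (ux^2)/uu - eps*Vx^2 - al'*U/alpha + bx*U + eps*bx*V^2 + 2*eps*bt*bx*V - btt*V
     \<le> -eps*Vx^2 + (c1/a + c1 + 2*eps + 2*eps*B + 1) * g * ((Phi + V^2/2) + 1)"
proof -
  define W where "W = Phi + V^2/2 + 1"
  have W1: "W \<ge> 1" using Phi unfolding W_def by simp
  have g0: "g \<ge> 0" using bx by linarith
  have "c1*(Phi+1) \<le> c1*W" using c1 unfolding W_def by (intro mult_left_mono) auto
  then have UW: "\<bar>U\<bar> \<le> c1 * W" using U by linarith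
  have VW: "\<bar>V\<bar> \<le> W" using abs_le_half_square_plus_half[of V] Phi unfolding W_def by linarith
  have p1: "- (ux^2)/uu \<le> 0" using u by simp
  have q2: "\<bar>al'\<bar> * \<bar>U\<bar> \<le> g * (c1 * W)" by (rule mult_mono[OF al' UW]) (use g0 in auto)
  have "\<bar>al'*U/alpha\<bar> = \<bar>al'\<bar> * \<bar>U\<bar> / alpha" using a by (simp add: abs_mult)
  also have "\<dots> \<le> g * (c1 * W) / alpha" using q2 a by (intro divide_right_mono) auto
  also have "\<dots> \<le> g * (c1 * W) / a" using a g0 c1 W1 by (intro divide_left_mono) auto
  finally have "- (al'*U/alpha) \<le> g * (c1 * W) / a" by (rule abs_le_D2)
  moreover have "g * (c1 * W) / a = c1/a * g * W" by simp
  ultimately have p2: "- al'*U/alpha \<le> c1/a * g * W" by simp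
  have "\<bar>bx*U\<bar> \<le> g * (c1 * W)" unfolding abs_mult by (rule mult_mono[OF bx UW]) (use g0 in auto)
  then have p3: "bx*U \<le> c1 * g * W" by (simp add: algebra_simps)
  have "eps*bx*V^2 \<le> eps * g * V^2" using bx eps by (intro mult_right_mono mult_left_mono) auto
  also have "\<dots> \<le> eps * g * (2*W)" using eps g0 Phi unfolding W_def by (intro mult_left_mono) auto
  finally have p4: "eps*bx*V^2 \<le> 2*eps*g*W" by simp
  have "\<bar>bt*bx*V\<bar> \<le> B * g * W" unfolding abs_mult
    by (intro mult_mono bt bx VW) (use B g0 in auto)
  then have "bt*bx*V \<le> B*g*W" by linarith
  then have "2*eps*(bt*bx*V) \<le> 2*eps*(B*g*W)" by (rule mult_left_mono) (use eps in auto)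
  then have p5: "2*eps*bt*bx*V \<le> 2*eps*B*g*W" by (simp add: mult.assoc)
  have "\<bar>btt*V\<bar> \<le> g * W" unfolding abs_mult by (intro mult_mono btt VW) (use g0 in auto)
  then have p6: "- btt*V \<le> g*W" by linarith
  have "(c1/a + c1 + 2*eps + 2*eps*B + 1) * g * W = c1/a*g*W + c1*g*W + 2*eps*g*W + 2*eps*B*g*W + g*W"
    by (simp add: algebra_simps)
  then show ?thesis using p1 p2 p3 p4 p5 p6 unfolding W_def by (simp add: algebra_simps)
qed

lemma convection_le:
  fixes w U V ux alpha M A :: real
  assumes w: "w = U + alpha" and al: "0 \<le> alpha" "alpha \<le> A" and V: "V^2 \<le> M"
  shows "- ux * w * V \<le> ux^2/2 + (2 + A^2) * M * (U^2/2 + 1)"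
proof -
  have M0: "0 \<le> M" using V zero_le_power2[of V] by linarith
  have "0 \<le> (ux + w * V)^2" by simp
  then have young: "- ux * w * V \<le> ux^2/2 + w^2 * V^2/2" by (simp add: power2_eq_square algebra_simps)
  have "alpha^2 \<le> A^2" using al by (intro power_mono) auto
  moreover have "0 \<le> (U - alpha)^2" by simp
  ultimately have "w^2 \<le> 2 * (U^2 + A^2)" using w by (simp add: power2_eq_square algebra_simps)
  then have "w^2 * V^2 \<le> 2 * (U^2 + A^2) * M" by (intro mult_mono V) auto
  then have a: "w^2 * V^2 / 2 \<le> (U^2 + A^2) * M" by (simp add: algebra_simps)
  have "U^2 + A^2 \<le> (2 + A^2) * (U^2/2 + 1)"
    using zero_le_mult_iff[of "A^2" "U^2"] by (simp add: field_simps)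
  then have "(U^2 + A^2) * M \<le> (2 + A^2) * (U^2/2 + 1) * M" by (rule mult_right_mono[OF _ M0])
  then have b: "(U^2 + A^2) * M \<le> (2 + A^2) * M * (U^2/2 + 1)" by (simp only: ac_simps)
  from young a b show ?thesis by linarith
qed

lemma L2_remainder_le:
  fixes w U V ux alpha al' bx g M A :: real
  assumes w: "w = U + alpha" and al: "0 \<le> alpha" "alpha \<le> A"
    and V: "V^2 \<le> M" and bx: "\<bar>bx\<bar> \<le> g" and al': "\<bar>al'\<bar> \<le> g" and A: "A \<ge> 0"
  shows "- (ux^2) - ux*w*V + bx*(U^2/2 + alpha*U) - al'*U
     \<le> -(1/2)*ux^2 + (4 + A + A^2) * (M + g) * (U^2/2 + 1)"
proof -
  define W where "W = U^2/2 + 1"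
  have W1: "W \<ge> 1" unfolding W_def by simp
  have g0: "g \<ge> 0" using bx by linarith
  have M0: "M \<ge> 0" using V zero_le_power2[of V] by linarith
  have UW: "\<bar>U\<bar> \<le> W" using abs_le_half_square_plus_half[of U] unfolding W_def by linarith
  have q1: "- ux*w*V \<le> ux^2/2 + (2 + A^2) * M * W"
    using convection_le[OF w al V] unfolding W_def .
  have "\<bar>U^2/2 + alpha*U\<bar> \<le> U^2/2 + alpha*\<bar>U\<bar>"
    using abs_triangle_ineq[of "U^2/2" "alpha*U"] al by (simp add: abs_mult)
  also have "\<dots> \<le> W + A*W" using UW al W1 unfolding W_def by (intro add_mono mult_mono) auto
  finally have "\<bar>bx*(U^2/2 + alpha*U)\<bar> \<le> g * (W + A*W)"
    unfolding abs_mult by (intro mult_mono bx) (use g0 in auto)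
  then have q2: "bx*(U^2/2 + alpha*U) \<le> (1 + A) * g * W" by (simp add: algebra_simps)
  have "\<bar>al'*U\<bar> \<le> g * W" unfolding abs_mult by (intro mult_mono al' UW) (use g0 in auto)
  then have q3: "- al'*U \<le> g * W" by linarith
  have "(4 + A + A^2) * (M + g) * W
      = (2 + A^2) * M * W + (1 + A) * g * W + g * W + ((2 + A) * M * W + 2 * g * W + A^2 * g * W)"
    by (simp add: algebra_simps)
  moreover have "0 \<le> (2 + A) * M * W + 2 * g * W + A^2 * g * W" using M0 g0 W1 A by simp
  ultimately show ?thesis using q1 q2 q3 unfolding W_def by linarith
qed

text \<open>The time derivative of the entropy density, after substituting both equations, as
  \<open>flux1_x\<close> plus the remainder bounded in \<open>entropy_remainder_le\<close>, written in raw variables so that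
  it is pure field algebra.\<close>

lemma entropy_balance_identity:
  fixes u v ux vx uxx vxx al al' b1 b2 b1' b2' x e L :: real
  assumes u: "u \<noteq> 0"
  shows "(uxx + (ux * v + u * vx)) * L - al' * (u - al) / al
    + (v - ((b2 - b1) * x + b1)) * ((ux + e * vxx + e * (2 * v * vx)) - ((b2' - b1') * x + b1'))
  = ((ux * v + u * vx + uxx) * L
  + (u * v + ux) * ux / u - (b2 - b1) * (u - al) - ((b2 - b1) * x + b1) * ux
  + e * (vx - (b2 - b1)) * vx + e * (v - ((b2 - b1) * x + b1)) * vxx - e * (b2 - b1) * (vx - (b2 - b1))
  + 2*e*(v - ((b2 - b1) * x + b1))^2 * (vx - (b2 - b1)) + e * (b2 - b1) * (v - ((b2 - b1) * x + b1))^2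
  + 2*e*((b2 - b1) * x + b1)*(v - ((b2 - b1) * x + b1))*(vx - (b2 - b1)))
  + (- (ux^2)/u - e*(vx - (b2 - b1))^2 - al'*(u - al)/al
     + (b2 - b1)*(u - al) + e*(b2 - b1)*(v - ((b2 - b1) * x + b1))^2 + 2*e*((b2 - b1) * x + b1)*(b2 - b1)*(v - ((b2 - b1) * x + b1))
     - ((b2' - b1') * x + b1')*(v - ((b2 - b1) * x + b1)))"
proof -
  have d1: "(u * v + ux) * ux / u = v * ux + ux^2/u" using u by (simp add: field_simps power2_eq_square)
  show ?thesis unfolding d1 by (simp add: algebra_simps power2_eq_square)
qed

section \<open>Boundary data\<close>

lemma smooth_derivsD:
  assumes "smooth_derivs S f D"
  shows "\<And>t. t \<in> S \<Longrightarrow> (f has_real_derivative D 1 t) (at t within S)" and "continuous_on S (D 1)"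
proof -
  have D0: "\<And>t. t \<in> S \<Longrightarrow> D 0 t = f t"
    and Dk: "\<And>k t. t \<in> S \<Longrightarrow> (D k has_real_derivative D (Suc k) t) (at t within S)"
    using assms unfolding smooth_derivs_def by auto
  show "(f has_real_derivative D 1 t) (at t within S)" if t: "t \<in> S" for t
  proof (rule has_field_derivative_transform_within[OF _ zero_less_one])
    show "(D 0 has_real_derivative D 1 t) (at t within S)" using Dk[OF t, of 0] by simp
  qed (use t D0 in auto)
  have "(D 1 has_real_derivative D 2 t) (at t within S)" if "t \<in> S" for t
    using Dk[OF that, of 1] by (simp add: numeral_2_eq_2)
  then show "continuous_on S (D 1)" by (rule DERIV_continuous_on)
qed

lemma DERIV_at_of_within_atLeast:
  fixes f :: "real \<Rightarrow> real"
  assumes "(f has_real_derivative d) (at t within {a..})" "a < t"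
  shows "(f has_real_derivative d) (at t)"
proof -
  have "at t within {a..} = at t" by (rule at_within_interior) (use assms(2) in simp)
  with assms(1) show ?thesis by simp
qed

locale boundary_data =
  fixes \<epsilon> a :: real and \<alpha> \<beta>1 \<beta>2 \<alpha>' \<beta>1' \<beta>2' u0 v0 :: "real \<Rightarrow> real"
  assumes eps: "\<epsilon> > 0"
    and a_pos: "a > 0" and \<alpha>_ge_a: "\<And>t. 0 \<le> t \<Longrightarrow> a \<le> \<alpha> t"
    and d\<alpha>: "\<And>t. 0 \<le> t \<Longrightarrow> (\<alpha> has_real_derivative \<alpha>' t) (at t within {0..})"
    and d\<beta>1: "\<And>t. 0 \<le> t \<Longrightarrow> (\<beta>1 has_real_derivative \<beta>1' t) (at t within {0..})"
    and d\<beta>2: "\<And>t. 0 \<le> t \<Longrightarrow> (\<beta>2 has_real_derivative \<beta>2' t) (at t within {0..})"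
    and c\<alpha>': "continuous_on {0..} \<alpha>'"
    and c\<beta>1': "continuous_on {0..} \<beta>1'"
    and c\<beta>2': "continuous_on {0..} \<beta>2'"
    and L1_\<alpha>': "set_integrable lborel {0..} \<alpha>'"
    and L1_\<beta>: "set_integrable lborel {0..} (\<lambda>t. \<beta>1 t - \<beta>2 t)"
    and L1_\<beta>1': "set_integrable lborel {0..} \<beta>1'"
    and L1_\<beta>2': "set_integrable lborel {0..} \<beta>2'"
begin

lemma c\<alpha>: "continuous_on {0..} \<alpha>" and c\<beta>1: "continuous_on {0..} \<beta>1" and c\<beta>2: "continuous_on {0..} \<beta>2"
  by (auto intro: DERIV_continuous_on d\<alpha> d\<beta>1 d\<beta>2)

lemma d\<alpha>_at: "0 < t \<Longrightarrow> (\<alpha> has_real_derivative \<alpha>' t) (at t)"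
  by (rule DERIV_at_of_within_atLeast[OF d\<alpha>]) auto

lemma d\<beta>1_at: "0 < t \<Longrightarrow> (\<beta>1 has_real_derivative \<beta>1' t) (at t)"
  by (rule DERIV_at_of_within_atLeast[OF d\<beta>1]) auto

lemma d\<beta>2_at: "0 < t \<Longrightarrow> (\<beta>2 has_real_derivative \<beta>2' t) (at t)"
  by (rule DERIV_at_of_within_atLeast[OF d\<beta>2]) auto

lemma \<alpha>_pos: "0 \<le> t \<Longrightarrow> \<alpha> t > 0"
  using \<alpha>_ge_a a_pos by force

definition "A = \<bar>\<alpha> 0\<bar> + (LINT s:{0..}|lborel. \<bar>\<alpha>' s\<bar>)"
definition "B = max (\<bar>\<beta>1 0\<bar> + (LINT s:{0..}|lborel. \<bar>\<beta>1' s\<bar>)) (\<bar>\<beta>2 0\<bar> + (LINT s:{0..}|lborel. \<bar>\<beta>2' s\<bar>))"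

lemma \<alpha>_le_A: "0 \<le> t \<Longrightarrow> \<alpha> t \<le> A"
  using abs_le_initial_plus_L1_norm_deriv[OF d\<alpha> c\<alpha>' L1_\<alpha>'] unfolding A_def by fastforce

lemma abs_\<beta>1_le_B: "0 \<le> t \<Longrightarrow> \<bar>\<beta>1 t\<bar> \<le> B"
  using abs_le_initial_plus_L1_norm_deriv[OF d\<beta>1 c\<beta>1' L1_\<beta>1'] unfolding B_def by fastforce

lemma abs_\<beta>2_le_B: "0 \<le> t \<Longrightarrow> \<bar>\<beta>2 t\<bar> \<le> B"
  using abs_le_initial_plus_L1_norm_deriv[OF d\<beta>2 c\<beta>2' L1_\<beta>2'] unfolding B_def by fastforce

lemma A_pos: "A > 0"
  using \<alpha>_le_A[of 0] \<alpha>_pos[of 0] by simp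

lemma B_nonneg: "B \<ge> 0"
  using abs_\<beta>1_le_B[of 0] by simp

definition "g t = \<bar>\<alpha>' t\<bar> + \<bar>\<beta>1 t - \<beta>2 t\<bar> + \<bar>\<beta>1' t\<bar> + \<bar>\<beta>2' t\<bar>"
definition "Lg = (LINT s:{0..}|lborel. \<bar>\<alpha>' s\<bar>) + (LINT s:{0..}|lborel. \<bar>\<beta>1 s - \<beta>2 s\<bar>)
  + (LINT s:{0..}|lborel. \<bar>\<beta>1' s\<bar>) + (LINT s:{0..}|lborel. \<bar>\<beta>2' s\<bar>)"

lemma g_nonneg: "g t \<ge> 0"
  unfolding g_def by simp

lemma continuous_on_g: "continuous_on {0..} g"
  unfolding g_def by (intro continuous_intros c\<alpha>' c\<beta>1 c\<beta>2 c\<beta>1' c\<beta>2')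

lemma integral_g_le: assumes t: "0 \<le> t" shows "integral {0..t} g \<le> Lg"
proof -
  define I where "I f = integral {0..t} (\<lambda>s. \<bar>f s\<bar>)" for f :: "real \<Rightarrow> real"
  have hI: "((\<lambda>s. \<bar>f s\<bar>) has_integral I f) {0..t}" if "continuous_on {0..} f" for f
    unfolding I_def using t
    by (intro integrable_integral integrable_continuous_interval continuous_on_rabs
        continuous_on_subset[OF that]) auto
  have c\<beta>: "continuous_on {0..} (\<lambda>s. \<beta>1 s - \<beta>2 s)" by (intro continuous_intros c\<beta>1 c\<beta>2)
  have "(g has_integral (I \<alpha>' + I (\<lambda>s. \<beta>1 s - \<beta>2 s) + I \<beta>1' + I \<beta>2')) {0..t}"
    unfolding g_def[abs_def]
    by (rule has_integral_add[OF has_integral_add[OF has_integral_add[OF hI[OF c\<alpha>'] hI[OF c\<beta>]]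
          hI[OF c\<beta>1']] hI[OF c\<beta>2']])
  then have "integral {0..t} g = I \<alpha>' + I (\<lambda>s. \<beta>1 s - \<beta>2 s) + I \<beta>1' + I \<beta>2'"
    by (rule integral_unique)
  also have "\<dots> \<le> Lg" unfolding Lg_def I_def
    by (intro add_mono integral_abs_le_L1_norm L1_\<alpha>' L1_\<beta> L1_\<beta>1' L1_\<beta>2' t)
  finally show ?thesis .
qed

definition "\<beta> x t = (\<beta>2 t - \<beta>1 t) * x + \<beta>1 t"
definition "\<beta>x t = \<beta>2 t - \<beta>1 t"
definition "\<beta>t x t = (\<beta>2' t - \<beta>1' t) * x + \<beta>1' t"

lemma abs_\<beta>_le_B:
  assumes x: "x \<in> {0..1}" and t: "0 \<le> t"
  shows "\<bar>\<beta> x t\<bar> \<le> B"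
proof -
  have "\<beta> x t = (1 - x) * \<beta>1 t + x * \<beta>2 t" unfolding \<beta>_def by (simp add: algebra_simps)
  also have "\<bar>\<dots>\<bar> \<le> (1 - x) * \<bar>\<beta>1 t\<bar> + x * \<bar>\<beta>2 t\<bar>"
    using x by (intro abs_convex_combination_le) auto
  also have "\<dots> \<le> (1 - x) * B + x * B"
    using x abs_\<beta>1_le_B[OF t] abs_\<beta>2_le_B[OF t] by (intro add_mono mult_left_mono) auto
  finally show ?thesis by (simp add: algebra_simps)
qed

lemma abs_\<beta>t_le_g:
  assumes x: "x \<in> {0..1}"
  shows "\<bar>\<beta>t x t\<bar> \<le> g t"
proof -
  have "\<beta>t x t = (1 - x) * \<beta>1' t + x * \<beta>2' t" unfolding \<beta>t_def by (simp add: algebra_simps)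
  also have "\<bar>\<dots>\<bar> \<le> (1 - x) * \<bar>\<beta>1' t\<bar> + x * \<bar>\<beta>2' t\<bar>"
    using x by (intro abs_convex_combination_le) auto
  also have "\<dots> \<le> \<bar>\<beta>1' t\<bar> + \<bar>\<beta>2' t\<bar>"
    using x by (intro add_mono mult_left_le_one_le) auto
  finally show ?thesis
    using abs_ge_zero[of "\<alpha>' t"] abs_ge_zero[of "\<beta>1 t - \<beta>2 t"] unfolding g_def by linarith
qed

lemma abs_\<beta>x_le_g: "\<bar>\<beta>x t\<bar> \<le> g t"
  using abs_minus_commute[of "\<beta>2 t" "\<beta>1 t"] abs_ge_zero[of "\<alpha>' t"] abs_ge_zero[of "\<beta>1' t"]
    abs_ge_zero[of "\<beta>2' t"]
  unfolding \<beta>x_def g_def by linarith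

lemma abs_\<alpha>'_le_g: "\<bar>\<alpha>' t\<bar> \<le> g t"
  using abs_ge_zero[of "\<beta>1 t - \<beta>2 t"] abs_ge_zero[of "\<beta>1' t"] abs_ge_zero[of "\<beta>2' t"]
  unfolding g_def by linarith

definition "c1 = 1 + 10 * A"
definition "K1 = c1/a + c1 + 2*\<epsilon> + 2*\<epsilon>*B + 1"
definition "K2 = 4 + A + A^2"

lemma K1_nonneg: "K1 \<ge> 0"
  using A_pos a_pos eps B_nonneg unfolding K1_def c1_def by simp

lemma K2_nonneg: "K2 \<ge> 0"
  using A_pos unfolding K2_def by simp

text \<open>A solution enters the final constant only through its initial data, so the bound is
  uniform in \<open>T\<close> and in the solution.\<close>

definition "E1_init = integral {0..1} (\<lambda>x. entropy_density (\<alpha> 0) (u0 x) + (v0 x - \<beta> x 0)^2 / 2)"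
definition "E2_init = integral {0..1} (\<lambda>x. (u0 x - \<alpha> 0)^2 / 2)"
definition "entropy_bound = (E1_init + 1) * exp (K1 * Lg)"
definition "L2_bound = (E2_init + 1) * exp (K2 * (entropy_bound / \<epsilon> + Lg))"

end

section \<open>Energy estimates for a classical solution\<close>

locale energy_setting = boundary_data +
  fixes T :: real and u v ux vx uxx vxx ut vt :: "real \<Rightarrow> real \<Rightarrow> real"
  assumes T_pos: "T > 0"
  and cu: "continuous_on ({0..1} \<times> {0..<T}) (\<lambda>(x,t). u x t)"
  and cv: "continuous_on ({0..1} \<times> {0..<T}) (\<lambda>(x,t). v x t)"
  and cux: "continuous_on ({0..1} \<times> {0..<T}) (\<lambda>(x,t). ux x t)"
  and cvx: "continuous_on ({0..1} \<times> {0..<T}) (\<lambda>(x,t). vx x t)"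
  and cuxx: "continuous_on ({0..1} \<times> {0<..<T}) (\<lambda>(x,t). uxx x t)"
  and cvxx: "continuous_on ({0..1} \<times> {0<..<T}) (\<lambda>(x,t). vxx x t)"
  and cut: "continuous_on ({0..1} \<times> {0<..<T}) (\<lambda>(x,t). ut x t)"
  and cvt: "continuous_on ({0..1} \<times> {0<..<T}) (\<lambda>(x,t). vt x t)"
  and dux: "\<And>x t. x \<in> {0..1} \<Longrightarrow> t \<in> {0..<T} \<Longrightarrow> ((\<lambda>y. u y t) has_real_derivative ux x t) (at x within {0..1})"
  and dvx: "\<And>x t. x \<in> {0..1} \<Longrightarrow> t \<in> {0..<T} \<Longrightarrow> ((\<lambda>y. v y t) has_real_derivative vx x t) (at x within {0..1})"
  and duxx: "\<And>x t. x \<in> {0..1} \<Longrightarrow> t \<in> {0<..<T} \<Longrightarrow> ((\<lambda>y. ux y t) has_real_derivative uxx x t) (at x within {0..1})"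
  and dvxx: "\<And>x t. x \<in> {0..1} \<Longrightarrow> t \<in> {0<..<T} \<Longrightarrow> ((\<lambda>y. vx y t) has_real_derivative vxx x t) (at x within {0..1})"
  and dut: "\<And>x t. x \<in> {0..1} \<Longrightarrow> t \<in> {0<..<T} \<Longrightarrow> ((\<lambda>s. u x s) has_real_derivative ut x t) (at t)"
  and dvt: "\<And>x t. x \<in> {0..1} \<Longrightarrow> t \<in> {0<..<T} \<Longrightarrow> ((\<lambda>s. v x s) has_real_derivative vt x t) (at t)"
  and pde_u: "\<And>x t. x \<in> {0<..<1} \<Longrightarrow> t \<in> {0<..<T} \<Longrightarrow> ut x t - (ux x t * v x t + u x t * vx x t) = uxx x t"
  and pde_v: "\<And>x t. x \<in> {0<..<1} \<Longrightarrow> t \<in> {0<..<T} \<Longrightarrow> vt x t - ux x t = \<epsilon> * vxx x t + \<epsilon> * (2 * v x t * vx x t)"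
  and init: "\<And>x. x \<in> {0..1} \<Longrightarrow> u x 0 = u0 x \<and> v x 0 = v0 x"
  and bdry: "\<And>t. t \<in> {0..<T} \<Longrightarrow> u 0 t = \<alpha> t \<and> u 1 t = \<alpha> t \<and> v 0 t = \<beta>1 t \<and> v 1 t = \<beta>2 t"
  and u_pos: "\<And>x t. x \<in> {0..1} \<Longrightarrow> t \<in> {0..<T} \<Longrightarrow> u x t > 0"
begin

text \<open>Time comes first in these product sets, as the parametric integration lemmas
  \<open>integral_continuous_on_param\<close> and \<open>leibniz_rule_field_derivative\<close> require.\<close>

abbreviation "S0 \<equiv> {0..<T} \<times> {0..1::real}"
abbreviation "S1 \<equiv> {0<..<T} \<times> {0..1::real}"

lemma continuous_on_data:
  "S \<subseteq> {0..} \<times> UNIV \<Longrightarrow> continuous_on S (\<lambda>p. \<alpha> (fst p))"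
  "S \<subseteq> {0..} \<times> UNIV \<Longrightarrow> continuous_on S (\<lambda>p. \<alpha>' (fst p))"
  "S \<subseteq> {0..} \<times> UNIV \<Longrightarrow> continuous_on S (\<lambda>p. \<beta>1 (fst p))"
  "S \<subseteq> {0..} \<times> UNIV \<Longrightarrow> continuous_on S (\<lambda>p. \<beta>1' (fst p))"
  "S \<subseteq> {0..} \<times> UNIV \<Longrightarrow> continuous_on S (\<lambda>p. \<beta>2 (fst p))"
  "S \<subseteq> {0..} \<times> UNIV \<Longrightarrow> continuous_on S (\<lambda>p. \<beta>2' (fst p))"
  by (auto intro!: continuous_on_compose2[OF _ continuous_on_fst]
      c\<alpha> c\<alpha>' c\<beta>1 c\<beta>1' c\<beta>2 c\<beta>2')

lemma continuous_on_solution: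
  "continuous_on S0 (\<lambda>p. u (snd p) (fst p))" "continuous_on S0 (\<lambda>p. v (snd p) (fst p))"
  "continuous_on S0 (\<lambda>p. ux (snd p) (fst p))" "continuous_on S0 (\<lambda>p. vx (snd p) (fst p))"
  "continuous_on S1 (\<lambda>p. u (snd p) (fst p))" "continuous_on S1 (\<lambda>p. v (snd p) (fst p))"
  "continuous_on S1 (\<lambda>p. ux (snd p) (fst p))" "continuous_on S1 (\<lambda>p. vx (snd p) (fst p))"
  "continuous_on S1 (\<lambda>p. uxx (snd p) (fst p))" "continuous_on S1 (\<lambda>p. vxx (snd p) (fst p))"
  "continuous_on S1 (\<lambda>p. ut (snd p) (fst p))" "continuous_on S1 (\<lambda>p. vt (snd p) (fst p))"
  by (auto intro!: continuous_on_swap_product cu cv cux cvx cuxx cvxx cut cvt)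

lemmas [continuous_intros] = continuous_on_solution
  continuous_on_data[where S = S0] continuous_on_data[where S = S1]

lemma ln_args_nonzero:
  "\<forall>p\<in>S0. u (snd p) (fst p) / \<alpha> (fst p) \<noteq> 0" "\<forall>p\<in>S1. u (snd p) (fst p) / \<alpha> (fst p) \<noteq> 0"
  "\<forall>p\<in>S0. u (snd p) (fst p) \<noteq> 0" "\<forall>p\<in>S1. u (snd p) (fst p) \<noteq> 0"
  "\<forall>p\<in>S0. \<alpha> (fst p) \<noteq> 0" "\<forall>p\<in>S1. \<alpha> (fst p) \<noteq> 0"
  using u_pos \<alpha>_pos by (fastforce intro!: divide_pos_pos less_imp_neq[symmetric])+

lemma continuous_on_integral_slice:
  fixes f :: "real \<Rightarrow> real \<Rightarrow> real"
  assumes "continuous_on S0 (\<lambda>p. f (snd p) (fst p))"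
  shows "continuous_on {0..<T} (\<lambda>t. integral {0..1} (\<lambda>x. f x t))"
proof -
  have "continuous_on {0..<T} (\<lambda>t. integral (cbox 0 1) (\<lambda>x. f x t))"
    by (rule integral_continuous_on_param[where f="\<lambda>t x. f x t" and U="{0..<T}"])
       (use assms in \<open>simp add: case_prod_beta'\<close>)
  then show ?thesis by simp
qed

lemma has_real_derivative_integral_slice:
  fixes f f' :: "real \<Rightarrow> real \<Rightarrow> real"
  assumes df: "\<And>x s. x \<in> {0..1} \<Longrightarrow> s \<in> {0<..<T} \<Longrightarrow> ((\<lambda>s. f x s) has_real_derivative f' x s) (at s)"
    and cf: "continuous_on S0 (\<lambda>p. f (snd p) (fst p))"
    and cf': "continuous_on S1 (\<lambda>p. f' (snd p) (fst p))"
    and t: "t \<in> {0<..<T}"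
  shows "((\<lambda>s. integral {0..1} (\<lambda>x. f x s)) has_real_derivative integral {0..1} (\<lambda>x. f' x t)) (at t)"
proof -
  have "((\<lambda>s. integral (cbox 0 1) (\<lambda>x. f x s)) has_field_derivative integral (cbox 0 1) (\<lambda>x. f' x t))
      (at t within {0<..<T})"
  proof (rule leibniz_rule_field_derivative[where f="\<lambda>s x. f x s" and fx = "\<lambda>s x. f' x s"])
    fix s x assume "s \<in> {0<..<T}" "x \<in> cbox (0::real) 1"
    then show "((\<lambda>s. f x s) has_field_derivative f' x s) (at s within {0<..<T})"
      using df by (auto intro: has_field_derivative_at_within)
  next
    fix s assume "s \<in> {0<..<T}"
    then show "(\<lambda>x. f x s) integrable_on cbox 0 1"
      using integrable_on_slice[OF cf] by simp
  next
    show "continuous_on ({0<..<T} \<times> cbox 0 1) (\<lambda>(s, x). f' x s)"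
      using cf' by (simp add: case_prod_beta')
  qed (use t in auto)
  moreover have "at t within {0<..<T} = at t" by (rule at_within_open) (use t in auto)
  ultimately show ?thesis by simp
qed

lemma interior_x_derivatives:
  assumes x: "x \<in> {0<..<1}" and t: "t \<in> {0<..<T}"
  shows "((\<lambda>y. u y t) has_real_derivative ux x t) (at x)" "((\<lambda>y. v y t) has_real_derivative vx x t) (at x)"
    "((\<lambda>y. ux y t) has_real_derivative uxx x t) (at x)" "((\<lambda>y. vx y t) has_real_derivative vxx x t) (at x)"
proof -
  have w: "at x within {0..1} = at x" by (rule at_within_interior) (use x in auto)
  have x': "x \<in> {0..1}" and t': "t \<in> {0..<T}" using x t by auto
  show "((\<lambda>y. u y t) has_real_derivative ux x t) (at x)" "((\<lambda>y. v y t) has_real_derivative vx x t) (at x)"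
    "((\<lambda>y. ux y t) has_real_derivative uxx x t) (at x)" "((\<lambda>y. vx y t) has_real_derivative vxx x t) (at x)"
    using dux[OF x' t'] dvx[OF x' t'] duxx[OF x' t] dvxx[OF x' t] unfolding w by auto
qed

lemma x_derivative_unique:
  assumes x: "x \<in> {0..1}" and t: "t \<in> {0..<T}"
    and d: "((\<lambda>y. u y t) has_real_derivative d) (at x within {0..1})"
  shows "d = ux x t"
  using vector_derivative_unique_within_closed_interval[of 0 1 x "\<lambda>y. u y t" d "ux x t"] x t d dux[OF x t]
  by (simp add: has_real_derivative_iff_has_vector_derivative)

lemma abs_u_deviation_le:
  assumes x: "x \<in> {0..1}" and t: "t \<in> {0..<T}"
  shows "\<bar>u x t - \<alpha> t\<bar> \<le> c1 * (entropy_density (\<alpha> t) (u x t) + 1)"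
proof -
  have u: "u x t > 0" using u_pos x t by auto
  have al: "\<alpha> t > 0" "\<alpha> t \<le> A" using \<alpha>_pos \<alpha>_le_A t by auto
  have "u x t \<le> entropy_density (\<alpha> t) (u x t) + 9 * \<alpha> t" by (rule le_entropy_density[OF u al(1)])
  then have "\<bar>u x t - \<alpha> t\<bar> \<le> entropy_density (\<alpha> t) (u x t) + 10 * A" using u al by linarith
  also have "\<dots> \<le> c1 * (entropy_density (\<alpha> t) (u x t) + 1)"
    using entropy_density_nonneg[OF u al(1)] A_pos unfolding c1_def by (simp add: algebra_simps)
  finally show ?thesis .
qed

definition "e1 x t = entropy_density (\<alpha> t) (u x t) + (v x t - \<beta> x t)^2 / 2"
definition "e1_t x t = ut x t * ln (u x t / \<alpha> t) - \<alpha>' t * (u x t - \<alpha> t) / \<alpha> t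
    + (v x t - \<beta> x t) * (vt x t - \<beta>t x t)"
definition "E1 t = integral {0..1} (\<lambda>x. e1 x t)"
definition "Dv t = integral {0..1} (\<lambda>x. (vx x t - \<beta>x t)^2)"

text \<open>\<open>flux1\<close> vanishes at \<open>x = 0, 1\<close>, where \<open>u = \<alpha>\<close> and \<open>v = \<beta>\<close>; its \<open>x\<close>-derivative
  collects the terms of \<open>e1_t\<close> that disappear upon integration by parts.\<close>

definition "flux1 x t = (u x t * v x t + ux x t) * ln (u x t / \<alpha> t) - \<beta> x t * (u x t - \<alpha> t)
  + \<epsilon> * (v x t - \<beta> x t) * vx x t - \<epsilon> * \<beta>x t * (v x t - \<beta> x t) + (2*\<epsilon>/3) * (v x t - \<beta> x t)^3
  + \<epsilon> * \<beta> x t * (v x t - \<beta> x t)^2"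
definition "flux1_x x t = (ux x t * v x t + u x t * vx x t + uxx x t) * ln (u x t / \<alpha> t)
  + (u x t * v x t + ux x t) * ux x t / u x t - \<beta>x t * (u x t - \<alpha> t) - \<beta> x t * ux x t
  + \<epsilon> * (vx x t - \<beta>x t) * vx x t + \<epsilon> * (v x t - \<beta> x t) * vxx x t - \<epsilon> * \<beta>x t * (vx x t - \<beta>x t)
  + 2*\<epsilon>*(v x t - \<beta> x t)^2 * (vx x t - \<beta>x t) + \<epsilon> * \<beta>x t * (v x t - \<beta> x t)^2
  + 2*\<epsilon>*\<beta> x t*(v x t - \<beta> x t)*(vx x t - \<beta>x t)"

lemma e1_nonneg: "x \<in> {0..1} \<Longrightarrow> t \<in> {0..<T} \<Longrightarrow> e1 x t \<ge> 0"
  unfolding e1_def using entropy_density_nonneg u_pos \<alpha>_pos by (simp add: add_nonneg_nonneg)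

lemma continuous_on_e1: "continuous_on S0 (\<lambda>p. e1 (snd p) (fst p))"
  unfolding e1_def entropy_density_def \<beta>_def by (auto intro!: continuous_intros ln_args_nonzero)

lemma continuous_on_e1_t: "continuous_on S1 (\<lambda>p. e1_t (snd p) (fst p))"
  unfolding e1_t_def \<beta>_def \<beta>t_def by (auto intro!: continuous_intros ln_args_nonzero)

lemma continuous_on_flux1: "continuous_on S1 (\<lambda>p. flux1 (snd p) (fst p))"
  unfolding flux1_def \<beta>_def \<beta>x_def by (auto intro!: continuous_intros ln_args_nonzero)

lemma continuous_on_flux1_x: "continuous_on S1 (\<lambda>p. flux1_x (snd p) (fst p))"
  unfolding flux1_x_def \<beta>_def \<beta>x_def by (auto intro!: continuous_intros ln_args_nonzero)

lemma continuous_on_v_deviation_x: "continuous_on S0 (\<lambda>p. (vx (snd p) (fst p) - \<beta>x (fst p))^2)"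
  unfolding \<beta>x_def by (auto intro!: continuous_intros)

lemma e1_has_derivative:
  assumes x: "x \<in> {0..1}" and t: "t \<in> {0<..<T}"
  shows "((\<lambda>s. e1 x s) has_real_derivative e1_t x t) (at t)"
proof -
  have u: "u x t > 0" using u_pos x t by auto
  have al: "\<alpha> t > 0" using \<alpha>_pos t by auto
  have dl: "((\<lambda>s. ln (u x s / \<alpha> s)) has_real_derivative (ut x t / u x t - \<alpha>' t / \<alpha> t)) (at t)"
    by (rule derivative_eq_intros dut[OF x t] d\<alpha>_at refl
        | use t u al in \<open>simp add: field_simps power2_eq_square\<close>)+
  show ?thesis unfolding e1_def entropy_density_def \<beta>_def e1_t_def \<beta>t_def
    by (rule derivative_eq_intros dut[OF x t] dvt[OF x t] d\<alpha>_at d\<beta>1_at d\<beta>2_at dl refl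
        | use t u al in \<open>simp add: field_simps power2_eq_square\<close>)+
qed

lemma E1_has_derivative: "t \<in> {0<..<T} \<Longrightarrow> (E1 has_real_derivative integral {0..1} (\<lambda>x. e1_t x t)) (at t)"
  unfolding E1_def
  by (rule has_real_derivative_integral_slice[OF e1_has_derivative continuous_on_e1 continuous_on_e1_t])

lemma flux1_has_derivative:
  assumes x: "x \<in> {0<..<1}" and t: "t \<in> {0<..<T}"
  shows "((\<lambda>y. flux1 y t) has_real_derivative flux1_x x t) (at x)"
proof -
  have u: "u x t > 0" using u_pos x t by auto
  have al: "\<alpha> t > 0" using \<alpha>_pos t by auto
  have dl: "((\<lambda>y. ln (u y t / \<alpha> t)) has_real_derivative (ux x t / u x t)) (at x)"
    by (rule derivative_eq_intros interior_x_derivatives[OF x t] refl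
        | use t u al in \<open>simp add: field_simps power2_eq_square\<close>)+
  have db: "((\<lambda>y. \<beta> y t) has_real_derivative \<beta>x t) (at x)" unfolding \<beta>_def \<beta>x_def
    by (rule derivative_eq_intros refl | simp)+
  show ?thesis unfolding flux1_def flux1_x_def
    by (rule derivative_eq_intros interior_x_derivatives[OF x t] dl db refl
        | use t u al in \<open>simp add: field_simps power2_eq_square power3_eq_cube\<close>)+
qed

lemma e1_t_le:
  assumes x: "x \<in> {0<..<1}" and t: "t \<in> {0<..<T}"
  shows "e1_t x t \<le> flux1_x x t - \<epsilon> * (vx x t - \<beta>x t)^2 + K1 * g t * (e1 x t + 1)"
proof -
  have x': "x \<in> {0..1}" and t': "t \<in> {0..<T}" using x t by auto
  have u: "u x t > 0" using u_pos x' t' by auto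
  have al: "\<alpha> t > 0" using \<alpha>_pos t by auto
  define R where "R = - ((ux x t)^2)/u x t - \<epsilon>*(vx x t - \<beta>x t)^2 - \<alpha>' t*(u x t - \<alpha> t)/\<alpha> t
     + \<beta>x t*(u x t - \<alpha> t) + \<epsilon>*\<beta>x t*(v x t - \<beta> x t)^2 + 2*\<epsilon>*\<beta> x t*\<beta>x t*(v x t - \<beta> x t)
     - \<beta>t x t*(v x t - \<beta> x t)"
  have "e1_t x t = flux1_x x t + R"
  proof -
    have ut: "ut x t = uxx x t + (ux x t * v x t + u x t * vx x t)" using pde_u[OF x t] by simp
    have vt: "vt x t = ux x t + \<epsilon> * vxx x t + \<epsilon> * (2 * v x t * vx x t)" using pde_v[OF x t] by simp
    show ?thesis unfolding R_def e1_t_def flux1_x_def ut vt \<beta>_def \<beta>x_def \<beta>t_def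
      by (rule entropy_balance_identity) (use u in simp)
  qed
  moreover have "R \<le> - \<epsilon>*(vx x t - \<beta>x t)^2
      + K1 * g t * ((entropy_density (\<alpha> t) (u x t) + (v x t - \<beta> x t)^2/2) + 1)"
    unfolding K1_def R_def
    by (rule entropy_remainder_le[OF u a_pos \<alpha>_ge_a abs_u_deviation_le[OF x' t']
          entropy_density_nonneg[OF u al] eps abs_\<beta>_le_B[OF x'] abs_\<beta>x_le_g abs_\<alpha>'_le_g
          abs_\<beta>t_le_g[OF x']])
       (use t A_pos B_nonneg in \<open>auto simp: c1_def\<close>)
  ultimately show ?thesis unfolding e1_def by linarith
qed

lemma E1_derivative_le:
  assumes t: "t \<in> {0<..<T}"
  shows "integral {0..1} (\<lambda>x. e1_t x t) \<le> - \<epsilon> * Dv t + K1 * g t * (E1 t + 1)"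
  unfolding Dv_def E1_def
proof (rule integral_le_via_flux)
  have t0: "t \<in> {0..<T}" using t by auto
  show "continuous_on {0..1} (\<lambda>x. flux1 x t)" by (rule continuous_on_slice[OF continuous_on_flux1 t])
  show "flux1 0 t = 0" "flux1 1 t = 0"
    using bdry[of t] t \<alpha>_pos[of t] unfolding flux1_def \<beta>_def \<beta>x_def by auto
  show "(\<lambda>x. e1_t x t) integrable_on {0..1}" by (rule integrable_on_slice[OF continuous_on_e1_t t])
  show "(\<lambda>x. flux1_x x t) integrable_on {0..1}" by (rule integrable_on_slice[OF continuous_on_flux1_x t])
  show "(\<lambda>x. (vx x t - \<beta>x t)^2) integrable_on {0..1}"
    by (rule integrable_on_slice[OF continuous_on_v_deviation_x t0])
  show "(\<lambda>x. e1 x t) integrable_on {0..1}" by (rule integrable_on_slice[OF continuous_on_e1 t0])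
qed (use flux1_has_derivative e1_t_le t in auto)

lemma continuous_on_E1: "continuous_on {0..<T} E1"
  unfolding E1_def by (rule continuous_on_integral_slice[OF continuous_on_e1])

lemma continuous_on_Dv: "continuous_on {0..<T} Dv"
  unfolding Dv_def by (rule continuous_on_integral_slice[OF continuous_on_v_deviation_x])

lemma E1_nonneg: "t \<in> {0..<T} \<Longrightarrow> E1 t \<ge> 0"
  unfolding E1_def by (rule integral_nonneg[OF integrable_on_slice[OF continuous_on_e1]]) (auto intro: e1_nonneg)

lemma Dv_nonneg: "t \<in> {0..<T} \<Longrightarrow> Dv t \<ge> 0"
  unfolding Dv_def by (rule integral_nonneg[OF integrable_on_slice[OF continuous_on_v_deviation_x]]) auto

lemma E1_initial: "E1 0 = E1_init"
  unfolding E1_def E1_init_def e1_def by (rule integral_cong) (use init in auto)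

lemma entropy_estimate:
  assumes b: "b \<in> {0..<T}"
  shows "E1 b + \<epsilon> * integral {0..b} Dv + 1 \<le> entropy_bound"
proof -
  have sub: "{0..b} \<subseteq> {0..<T}" "{0..b} \<subseteq> {0..}" using b by auto
  have "E1 b + \<epsilon> * integral {0..b} Dv + 1 \<le> (E1 0 + 1) * exp (integral {0..b} (\<lambda>t. K1 * g t))"
  proof (rule gronwall_with_dissipation)
    show "continuous_on {0..b} E1" "continuous_on {0..b} Dv" "continuous_on {0..b} (\<lambda>t. K1 * g t)"
      using sub by (auto intro!: continuous_intros continuous_on_subset[OF continuous_on_E1]
          continuous_on_subset[OF continuous_on_Dv] continuous_on_subset[OF continuous_on_g])
    fix t assume "0 < t" "t < b"
    then have t: "t \<in> {0<..<T}" using b by auto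
    show "\<exists>e. (E1 has_real_derivative e) (at t) \<and> e \<le> - \<epsilon> * Dv t + K1 * g t * (E1 t + 1)"
      using E1_has_derivative[OF t] E1_derivative_le[OF t] by blast
  qed (use b eps sub Dv_nonneg K1_nonneg g_nonneg in auto)
  also have "\<dots> \<le> (E1 0 + 1) * exp (K1 * Lg)"
    using integral_g_le[of b] b K1_nonneg E1_nonneg[of 0] T_pos by (auto intro!: mult_left_mono)
  finally show ?thesis unfolding E1_initial entropy_bound_def .
qed

lemma integral_Dv_le: "b \<in> {0..<T} \<Longrightarrow> integral {0..b} Dv \<le> entropy_bound / \<epsilon>"
  using entropy_estimate[of b] E1_nonneg[of b] eps by (simp add: field_simps)

lemma v_deviation_sq_le_Dv:
  assumes x: "x \<in> {0..1}" and t: "t \<in> {0..<T}"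
  shows "(v x t - \<beta> x t)^2 \<le> Dv t"
proof -
  have db: "((\<lambda>y. \<beta> y t) has_real_derivative \<beta>x t) (at y within {0..1})" for y
    unfolding \<beta>_def \<beta>x_def by (rule derivative_eq_intros refl | simp)+
  have "((\<lambda>y. vx y t - \<beta>x t) has_integral ((v x t - \<beta> x t) - (v 0 t - \<beta> 0 t))) {0..x}"
  proof (rule fundamental_theorem_of_calculus)
    show "0 \<le> x" using x by auto
    fix y assume y: "y \<in> {0..x}"
    then have y1: "y \<in> {0..1}" using x by auto
    have "((\<lambda>y. v y t - \<beta> y t) has_real_derivative vx y t - \<beta>x t) (at y within {0..1})"
      by (intro derivative_intros dvx[OF y1 t] db)
    then have "((\<lambda>y. v y t - \<beta> y t) has_real_derivative vx y t - \<beta>x t) (at y within {0..x})"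
      by (rule DERIV_subset) (use x in auto)
    then show "((\<lambda>y. v y t - \<beta> y t) has_vector_derivative vx y t - \<beta>x t) (at y within {0..x})"
      by (simp add: has_real_derivative_iff_has_vector_derivative)
  qed
  moreover have "v 0 t - \<beta> 0 t = 0" using bdry[OF t] unfolding \<beta>_def by simp
  ultimately have "integral {0..x} (\<lambda>y. vx y t - \<beta>x t) = v x t - \<beta> x t" by (simp add: integral_unique)
  moreover have "(integral {0..x} (\<lambda>y. vx y t - \<beta>x t))^2 \<le> Dv t"
    unfolding Dv_def
    by (rule square_integral_le_integral_square)
       (use x continuous_on_slice[OF continuous_on_solution(4) t] in \<open>auto intro!: continuous_intros\<close>)
  ultimately show ?thesis by simp
qed

definition "e2 x t = (u x t - \<alpha> t)^2 / 2"
definition "e2_t x t = (u x t - \<alpha> t) * (ut x t - \<alpha>' t)"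
definition "E2 t = integral {0..1} (\<lambda>x. e2 x t)"
definition "Du t = integral {0..1} (\<lambda>x. (ux x t)^2)"

definition "flux2 x t = (u x t - \<alpha> t) * (u x t * v x t + ux x t)
   - \<beta> x t * ((u x t - \<alpha> t)^2/2 + \<alpha> t * (u x t - \<alpha> t))"
definition "flux2_x x t = ux x t * (u x t * v x t + ux x t)
   + (u x t - \<alpha> t) * (ux x t * v x t + u x t * vx x t + uxx x t)
   - \<beta>x t * ((u x t - \<alpha> t)^2/2 + \<alpha> t * (u x t - \<alpha> t)) - \<beta> x t * ((u x t - \<alpha> t) * ux x t + \<alpha> t * ux x t)"

lemma continuous_on_e2: "continuous_on S0 (\<lambda>p. e2 (snd p) (fst p))"
  unfolding e2_def by (auto intro!: continuous_intros)

lemma continuous_on_e2_t: "continuous_on S1 (\<lambda>p. e2_t (snd p) (fst p))"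
  unfolding e2_t_def by (auto intro!: continuous_intros)

lemma continuous_on_flux2: "continuous_on S1 (\<lambda>p. flux2 (snd p) (fst p))"
  unfolding flux2_def \<beta>_def by (auto intro!: continuous_intros)

lemma continuous_on_flux2_x: "continuous_on S1 (\<lambda>p. flux2_x (snd p) (fst p))"
  unfolding flux2_x_def \<beta>_def \<beta>x_def by (auto intro!: continuous_intros)

lemma continuous_on_ux_sq: "continuous_on S0 (\<lambda>p. (ux (snd p) (fst p))^2)"
  by (auto intro!: continuous_intros)

lemma e2_has_derivative:
  assumes x: "x \<in> {0..1}" and t: "t \<in> {0<..<T}"
  shows "((\<lambda>s. e2 x s) has_real_derivative e2_t x t) (at t)"
  unfolding e2_def e2_t_def
  by (rule derivative_eq_intros dut[OF x t] d\<alpha>_at refl | use t in \<open>simp add: field_simps power2_eq_square\<close>)+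

lemma E2_has_derivative: "t \<in> {0<..<T} \<Longrightarrow> (E2 has_real_derivative integral {0..1} (\<lambda>x. e2_t x t)) (at t)"
  unfolding E2_def
  by (rule has_real_derivative_integral_slice[OF e2_has_derivative continuous_on_e2 continuous_on_e2_t])

lemma flux2_has_derivative:
  assumes x: "x \<in> {0<..<1}" and t: "t \<in> {0<..<T}"
  shows "((\<lambda>y. flux2 y t) has_real_derivative flux2_x x t) (at x)"
proof -
  have db: "((\<lambda>y. \<beta> y t) has_real_derivative \<beta>x t) (at x)" unfolding \<beta>_def \<beta>x_def
    by (rule derivative_eq_intros refl | simp)+
  show ?thesis unfolding flux2_def flux2_x_def
    by (rule derivative_eq_intros interior_x_derivatives[OF x t] db refl
        | simp add: field_simps power2_eq_square)+
qed

lemma e2_t_le: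
  assumes x: "x \<in> {0<..<1}" and t: "t \<in> {0<..<T}"
  shows "e2_t x t \<le> flux2_x x t - (1/2) * (ux x t)^2 + K2 * (Dv t + g t) * (e2 x t + 1)"
proof -
  have x': "x \<in> {0..1}" and t': "t \<in> {0..<T}" using x t by auto
  define R where "R = - ((ux x t)^2) - ux x t * u x t * (v x t - \<beta> x t)
     + \<beta>x t * ((u x t - \<alpha> t)^2/2 + \<alpha> t * (u x t - \<alpha> t)) - \<alpha>' t * (u x t - \<alpha> t)"
  have "e2_t x t = flux2_x x t + R"
  proof -
    have ut: "ut x t = uxx x t + (ux x t * v x t + u x t * vx x t)" using pde_u[OF x t] by simp
    show ?thesis unfolding R_def e2_t_def flux2_x_def ut \<beta>_def \<beta>x_def
      by (simp add: algebra_simps power2_eq_square)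
  qed
  moreover have "R \<le> -(1/2)*(ux x t)^2 + K2 * (Dv t + g t) * ((u x t - \<alpha> t)^2/2 + 1)"
    unfolding R_def K2_def
    by (rule L2_remainder_le)
       (use t \<alpha>_pos[of t] \<alpha>_le_A[of t] v_deviation_sq_le_Dv[OF x' t'] abs_\<beta>x_le_g
          abs_\<alpha>'_le_g A_pos in auto)
  ultimately show ?thesis unfolding e2_def by linarith
qed

lemma E2_derivative_le:
  assumes t: "t \<in> {0<..<T}"
  shows "integral {0..1} (\<lambda>x. e2_t x t) \<le> - (1/2) * Du t + K2 * (Dv t + g t) * (E2 t + 1)"
  unfolding Du_def E2_def
proof (rule integral_le_via_flux)
  have t0: "t \<in> {0..<T}" using t by auto
  show "continuous_on {0..1} (\<lambda>x. flux2 x t)" by (rule continuous_on_slice[OF continuous_on_flux2 t])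
  show "flux2 0 t = 0" "flux2 1 t = 0" using bdry[of t] t unfolding flux2_def by auto
  show "(\<lambda>x. e2_t x t) integrable_on {0..1}" by (rule integrable_on_slice[OF continuous_on_e2_t t])
  show "(\<lambda>x. flux2_x x t) integrable_on {0..1}" by (rule integrable_on_slice[OF continuous_on_flux2_x t])
  show "(\<lambda>x. (ux x t)^2) integrable_on {0..1}" by (rule integrable_on_slice[OF continuous_on_ux_sq t0])
  show "(\<lambda>x. e2 x t) integrable_on {0..1}" by (rule integrable_on_slice[OF continuous_on_e2 t0])
qed (use flux2_has_derivative e2_t_le t in auto)

lemma continuous_on_E2: "continuous_on {0..<T} E2"
  unfolding E2_def by (rule continuous_on_integral_slice[OF continuous_on_e2])

lemma continuous_on_Du: "continuous_on {0..<T} Du"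
  unfolding Du_def by (rule continuous_on_integral_slice[OF continuous_on_ux_sq])

lemma E2_nonneg: "t \<in> {0..<T} \<Longrightarrow> E2 t \<ge> 0"
  unfolding E2_def by (rule integral_nonneg[OF integrable_on_slice[OF continuous_on_e2]]) (auto simp: e2_def)

lemma Du_nonneg: "t \<in> {0..<T} \<Longrightarrow> Du t \<ge> 0"
  unfolding Du_def by (rule integral_nonneg[OF integrable_on_slice[OF continuous_on_ux_sq]]) auto

lemma E2_initial: "E2 0 = E2_init"
  unfolding E2_def E2_init_def e2_def by (rule integral_cong) (use init in auto)

lemma L2_estimate:
  assumes b: "b \<in> {0..<T}"
  shows "E2 b + (1/2) * integral {0..b} Du + 1 \<le> L2_bound"
proof -
  have sub: "{0..b} \<subseteq> {0..<T}" "{0..b} \<subseteq> {0..}" using b by auto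
  have cDv: "continuous_on {0..b} Dv" and cg: "continuous_on {0..b} g"
    using sub by (auto intro: continuous_on_subset[OF continuous_on_Dv] continuous_on_subset[OF continuous_on_g])
  have "E2 b + (1/2) * integral {0..b} Du + 1 \<le> (E2 0 + 1) * exp (integral {0..b} (\<lambda>t. K2 * (Dv t + g t)))"
  proof (rule gronwall_with_dissipation)
    show "continuous_on {0..b} E2" "continuous_on {0..b} Du"
      using sub by (auto intro: continuous_on_subset[OF continuous_on_E2] continuous_on_subset[OF continuous_on_Du])
    show "continuous_on {0..b} (\<lambda>t. K2 * (Dv t + g t))" by (intro continuous_intros cDv cg)
    fix t assume "0 < t" "t < b"
    then have t: "t \<in> {0<..<T}" using b by auto
    show "\<exists>e. (E2 has_real_derivative e) (at t) \<and> e \<le> - (1/2) * Du t + K2 * (Dv t + g t) * (E2 t + 1)"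
      using E2_has_derivative[OF t] E2_derivative_le[OF t] by blast
  qed (use b sub Du_nonneg Dv_nonneg K2_nonneg g_nonneg in auto)
  also have "\<dots> \<le> (E2 0 + 1) * exp (K2 * (entropy_bound / \<epsilon> + Lg))"
  proof -
    have "integral {0..b} (\<lambda>t. K2 * (Dv t + g t)) = K2 * (integral {0..b} Dv + integral {0..b} g)"
      using integral_add[OF integrable_continuous_interval[OF cDv] integrable_continuous_interval[OF cg]]
      by simp
    also have "\<dots> \<le> K2 * (entropy_bound / \<epsilon> + Lg)"
      using integral_Dv_le[OF b] integral_g_le[of b] b K2_nonneg by (intro mult_left_mono add_mono) auto
    finally show ?thesis using E2_nonneg[of 0] T_pos by (auto intro!: mult_left_mono)
  qed
  finally show ?thesis unfolding E2_initial L2_bound_def .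
qed

lemma energy_bound:
  assumes b: "b \<in> {0..<T}"
  shows "integral {0..1} (\<lambda>x. (u x b - \<alpha> b)^2) + integral {0..1} (\<lambda>x. (v x b - \<beta> x b)^2)
     + integral {0..b} Du \<le> 2 * L2_bound + 2 * entropy_bound"
proof -
  have "integral {0..1} (\<lambda>x. (v x b - \<beta> x b)^2 / 2) \<le> E1 b"
    unfolding E1_def
  proof (rule integral_le)
    show "(\<lambda>x. (v x b - \<beta> x b)^2 / 2) integrable_on {0..1}"
      by (rule integrable_on_slice[OF _ b, of "\<lambda>x t. (v x t - \<beta> x t)^2 / 2"])
         (auto intro!: continuous_intros simp: \<beta>_def)
    show "(\<lambda>x. e1 x b) integrable_on {0..1}" by (rule integrable_on_slice[OF continuous_on_e1 b])
    fix x assume "x \<in> {0..1::real}"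
    then show "(v x b - \<beta> x b)^2 / 2 \<le> e1 x b"
      unfolding e1_def using entropy_density_nonneg u_pos \<alpha>_pos b by simp
  qed
  moreover have "0 \<le> \<epsilon> * integral {0..b} Dv"
    using b eps by (intro mult_nonneg_nonneg integral_nonneg integrable_continuous_interval
        continuous_on_subset[OF continuous_on_Dv] Dv_nonneg) auto
  moreover have "E2 b = integral {0..1} (\<lambda>x. (u x b - \<alpha> b)^2) / 2" unfolding E2_def e2_def by simp
  ultimately show ?thesis using entropy_estimate[OF b] L2_estimate[OF b] by simp
qed

end

lemma (in boundary_data) classical_sol_energy_bound:
  assumes sol: "classical_sol \<epsilon> u0 v0 \<alpha> \<beta>1 \<beta>2 T u v" and T: "T > 0"
    and pos: "\<forall>x\<in>{0..1}. \<forall>t\<in>{0..<T}. u x t > 0"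
    and dux: "\<forall>x\<in>{0..1}. \<forall>t\<in>{0..<T}. ((\<lambda>y. u y t) has_real_derivative ux x t) (at x within {0..1})"
    and t: "t \<in> {0..<T}"
  shows "integral {0..1} (\<lambda>x. (u x t - \<alpha> t)^2) + integral {0..1} (\<lambda>x. (v x t - \<beta> x t)^2)
     + integral {0..t} (\<lambda>\<tau>. integral {0..1} (\<lambda>x. (ux x \<tau>)^2)) \<le> 2 * L2_bound + 2 * entropy_bound"
proof -
  obtain ux' vx uxx vxx ut vt
    where "energy_setting \<epsilon> a \<alpha> \<beta>1 \<beta>2 \<alpha>' \<beta>1' \<beta>2' u0 v0 T u v ux' vx uxx vxx ut vt"
    using sol unfolding classical_sol_def
    apply (elim exE conjE)
    subgoal for ux' vx uxx vxx ut vt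
      by (intro that[of ux' vx uxx vxx ut vt] energy_setting.intro[OF boundary_data_axioms]
          energy_setting_axioms.intro) (use T pos in auto)
    done
  then interpret S: energy_setting \<epsilon> a \<alpha> \<beta>1 \<beta>2 \<alpha>' \<beta>1' \<beta>2' u0 v0 T u v ux' vx uxx vxx ut vt .
  have "ux x \<tau> = ux' x \<tau>" if "x \<in> {0..1}" "\<tau> \<in> {0..t}" for x \<tau>
    using that t dux by (intro S.x_derivative_unique) auto
  then have "integral {0..t} S.Du = integral {0..t} (\<lambda>\<tau>. integral {0..1} (\<lambda>x. (ux x \<tau>)^2))"
    unfolding S.Du_def by (intro integral_cong) auto
  with S.energy_bound[OF t] show ?thesis by simp
qed

theorem lemma2:
  fixes \<epsilon> :: real and u0 v0 \<alpha> \<beta>1 \<beta>2 :: "real \<Rightarrow> real"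
    and D\<alpha> D\<beta>1 D\<beta>2 :: "nat \<Rightarrow> real \<Rightarrow> real"
  assumes eps: "\<epsilon> > 0"
    and u0_pos: "\<forall>x\<in>{0..1}. u0 x > 0"
    and H2: "H2_01 u0" "H2_01 v0"
    and compat: "u0 0 = \<alpha> 0" "u0 1 = \<alpha> 0" "v0 0 = \<beta>1 0" "v0 1 = \<beta>2 0"
    and smooth: "smooth_derivs {0..} \<alpha> D\<alpha>" "smooth_derivs {0..} \<beta>1 D\<beta>1"
                "smooth_derivs {0..} \<beta>2 D\<beta>2"
    and alpha_low: "\<exists>a>0. \<forall>t\<ge>0. \<alpha> t \<ge> a"
    and alpha_W11: "set_integrable lborel {0..} (D\<alpha> 1)" "set_integrable lborel {0..} (D\<alpha> 2)"
    and beta_L1: "set_integrable lborel {0..} (\<lambda>t. \<beta>1 t - \<beta>2 t)"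
    and beta1_W11: "set_integrable lborel {0..} (D\<beta>1 1)" "set_integrable lborel {0..} (D\<beta>1 2)"
    and beta2_W11: "set_integrable lborel {0..} (D\<beta>2 1)" "set_integrable lborel {0..} (D\<beta>2 2)"
  shows "\<exists>C>0. \<forall>T>0. \<forall>u v ux.
           classical_sol \<epsilon> u0 v0 \<alpha> \<beta>1 \<beta>2 T u v \<longrightarrow>
           (\<forall>x\<in>{0..1}. \<forall>t\<in>{0..<T}. u x t > 0) \<longrightarrow>
           (\<forall>x\<in>{0..1}. \<forall>t\<in>{0..<T}. ((\<lambda>y. u y t) has_real_derivative ux x t) (at x within {0..1})) \<longrightarrow>
           (\<forall>t\<in>{0..<T}.
              integral {0..1} (\<lambda>x. (u x t - \<alpha> t)^2)
            + integral {0..1} (\<lambda>x. (v x t - ((\<beta>2 t - \<beta>1 t) * x + \<beta>1 t))^2)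
            + integral {0..t} (\<lambda>\<tau>. integral {0..1} (\<lambda>x. (ux x \<tau>)^2)) \<le> C)"
proof -
  obtain a where a: "a > 0" "\<forall>t\<ge>0. a \<le> \<alpha> t" using alpha_low by blast
  interpret D: boundary_data \<epsilon> a \<alpha> \<beta>1 \<beta>2 "D\<alpha> 1" "D\<beta>1 1" "D\<beta>2 1" u0 v0
    using eps a smooth_derivsD[OF smooth(1)] smooth_derivsD[OF smooth(2)] smooth_derivsD[OF smooth(3)]
      alpha_W11(1) beta_L1 beta1_W11(1) beta2_W11(1)
    by unfold_locales auto
  show ?thesis
  proof (intro exI[of _ "max 1 (2 * D.L2_bound + 2 * D.entropy_bound)"] conjI allI impI ballI)
    fix T u v ux t
    assume "T > 0" "classical_sol \<epsilon> u0 v0 \<alpha> \<beta>1 \<beta>2 T u v" "\<forall>x\<in>{0..1}. \<forall>t\<in>{0..<T}. u x t > 0"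
      "\<forall>x\<in>{0..1}. \<forall>t\<in>{0..<T}. ((\<lambda>y. u y t) has_real_derivative ux x t) (at x within {0..1})"
      "t \<in> {0..<T}"
    from D.classical_sol_energy_bound[OF this(2,1,3,4,5)]
    show "integral {0..1} (\<lambda>x. (u x t - \<alpha> t)^2)
        + integral {0..1} (\<lambda>x. (v x t - ((\<beta>2 t - \<beta>1 t) * x + \<beta>1 t))^2)
        + integral {0..t} (\<lambda>\<tau>. integral {0..1} (\<lambda>x. (ux x \<tau>)^2)) \<le> max 1 (2 * D.L2_bound + 2 * D.entropy_bound)"
      unfolding D.\<beta>_def by linarith
  qed simp
qed

end
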